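(* Let $\mathcal F$ be a proper filter on $\omega$. The game $\mathfrak G(\mathrm{Fr},[\omega]^{<\omega},\mathcal F^* )$ is equivalent to $\mathfrak G(\mathrm{Fr},\omega,\mathcal F^* )$ (a player has a winning strategy in one iff the same player has one in the other). Consequently the game $\mathfrak G(\mathrm{Fr},[\omega]^{<\omega},\mathcal F^* )$ is determined, and player I has a winning strategy iff $\mathcal F=\mathrm{Fr}$ iff player II has no winning strategy.
   Context: A filter on $\omega$ is a family $\mathcal F\subseteq\mathcal P(\omega)$ closed under finite intersections and supersets and containing all cofinite sets; it is proper if all its members are infinite. $\mathcal F^+=\{X:\omega\setminus X\notin\mathcal F\}$, $\mathcal F^*=\mathcal P(\omega)\setminus\mathcal F^+$. $\mathrm{Fr}$ is the family of cofinite subsets of $\omega$. Game $\mathfrak G(\mathcal X,\omega,\mathcal Z)$: at each stage $k$, I chooses $X_k\in\mathcal X$ and II responds with $n_k\in X_k$; II wins if $\{n_k:k\in\omega\}\in\mathcal Z$. Game $\mathfrak G(\mathcal X,[\omega]^{<\omega},\mathcal Z)$: at each stage $k$, I chooses $X_k\in\mathcal X$ and II responds with a nonempty finite $s_k\subseteq X_k$; II wins if $\bigcup_k s_k\in\mathcal Z$. In each game, I wins when II does not. *)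

theory Defs
  imports Main
begin

definition Fr :: "nat set set" where
  "Fr = {X. finite (- X)}"

definition is_filter :: "nat set set \<Rightarrow> bool" where
  "is_filter F \<longleftrightarrow>
     (\<forall>A B. A \<in> F \<longrightarrow> B \<in> F \<longrightarrow> A \<inter> B \<in> F) \<and>
     (\<forall>A B. A \<in> F \<longrightarrow> A \<subseteq> B \<longrightarrow> B \<in> F) \<and>
     Fr \<subseteq> F"

definition proper_filter :: "nat set set \<Rightarrow> bool" where
  "proper_filter F \<longleftrightarrow> is_filter F \<and> (\<forall>A\<in>F. infinite A)"

definition F_plus :: "nat set set \<Rightarrow> nat set set" where
  "F_plus F = {X. - X \<notin> F}"

definition F_star :: "nat set set \<Rightarrow> nat set set" where
  "F_star F = UNIV - F_plus F"

text \<open>Generic game: player I plays sets from XX, player II answers with a move of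
  type 'b legal w.r.t. I's last set; II wins iff payoff of II's moves lies in Z.
  A strategy for I maps the list of II's previous moves to I's next set;
  a strategy for II maps the list of I's moves so far (ending with the current one)
  to II's answer.\<close>

definition I_has_ws ::
  "nat set set \<Rightarrow> (nat set \<Rightarrow> 'b \<Rightarrow> bool) \<Rightarrow> ((nat \<Rightarrow> 'b) \<Rightarrow> nat set) \<Rightarrow> nat set set \<Rightarrow> bool" where
  "I_has_ws XX legal payoff Z \<longleftrightarrow>
     (\<exists>\<sigma> :: 'b list \<Rightarrow> nat set.
        (\<forall>h. \<sigma> h \<in> XX) \<and>
        (\<forall>b :: nat \<Rightarrow> 'b. (\<forall>k. legal (\<sigma> (map b [0..<k])) (b k)) \<longrightarrow> payoff b \<notin> Z))"

definition II_has_ws ::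
  "nat set set \<Rightarrow> (nat set \<Rightarrow> 'b \<Rightarrow> bool) \<Rightarrow> ((nat \<Rightarrow> 'b) \<Rightarrow> nat set) \<Rightarrow> nat set set \<Rightarrow> bool" where
  "II_has_ws XX legal payoff Z \<longleftrightarrow>
     (\<exists>\<tau> :: nat set list \<Rightarrow> 'b.
        (\<forall>xs. xs \<noteq> [] \<longrightarrow> set xs \<subseteq> XX \<longrightarrow> legal (last xs) (\<tau> xs)) \<and>
        (\<forall>X :: nat \<Rightarrow> nat set. (\<forall>k. X k \<in> XX) \<longrightarrow>
            payoff (\<lambda>k. \<tau> (map X [0..<Suc k])) \<in> Z))"

text \<open>The game G(XX, omega, Z): II answers with n in X_k; outcome {n_k}.\<close>
definition legal_pt :: "nat set \<Rightarrow> nat \<Rightarrow> bool" where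
  "legal_pt X n \<longleftrightarrow> n \<in> X"
definition payoff_pt :: "(nat \<Rightarrow> nat) \<Rightarrow> nat set" where
  "payoff_pt b = range b"

text \<open>The game G(XX, [omega]^<omega, Z): II answers with nonempty finite s subset X_k;
  outcome the union of the s_k.\<close>
definition legal_fin :: "nat set \<Rightarrow> nat set \<Rightarrow> bool" where
  "legal_fin X s \<longleftrightarrow> s \<noteq> {} \<and> finite s \<and> s \<subseteq> X"
definition payoff_fin :: "(nat \<Rightarrow> nat set) \<Rightarrow> nat set" where
  "payoff_fin b = \<Union> (range b)"

abbreviation I_wins_pt where "I_wins_pt XX Z \<equiv> I_has_ws XX legal_pt payoff_pt Z"
abbreviation II_wins_pt where "II_wins_pt XX Z \<equiv> II_has_ws XX legal_pt payoff_pt Z"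
abbreviation I_wins_fin where "I_wins_fin XX Z \<equiv> I_has_ws XX legal_fin payoff_fin Z"
abbreviation II_wins_fin where "II_wins_fin XX Z \<equiv> II_has_ws XX legal_fin payoff_fin Z"

end

theory Submission
  imports Defs
begin

text \<open>If \<open>F = Fr\<close>, then \<open>F\<^sup>*\<close> consists of the finite sets, and I wins by playing the tail
  \<open>{k..}\<close> in round \<open>k\<close>, which forces an infinite outcome. Otherwise some \<open>A \<in> F\<close> has infinite
  complement; every cofinite set meets \<open>-A\<close>, so II can answer inside \<open>-A\<close> forever, and then the
  complement of the outcome contains \<open>A\<close>. Singleton answers transfer these strategies between
  the two games, and the two players of one game never both have winning strategies.\<close>

lemma F_star_iff: "X \<in> F_star F \<longleftrightarrow> - X \<in> F"
  by (simp add: F_star_def F_plus_def)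

lemma F_star_Fr: "F_star Fr = {X. finite X}"
  by (auto simp: F_star_def F_plus_def Fr_def)

lemma atLeast_in_Fr: "{k..} \<in> Fr"
  by (simp add: Fr_def)

lemma Fr_meets_infinite:
  assumes "S \<in> Fr" "infinite B"
  shows "S \<inter> B \<noteq> {}"
proof -
  have "finite (- S)"
    using assms(1) by (simp add: Fr_def)
  then have "infinite (B - - S)"
    using assms(2) by (rule Diff_infinite_finite)
  then show ?thesis
    by (metis Diff_Compl finite.emptyI inf_commute)
qed

lemma seq_determined_by_prefixes_exists:
  "\<exists>b :: nat \<Rightarrow> 'b. \<forall>k. b k = c (map b [0..<k])"
proof -
  define L where "L = rec_nat [] (\<lambda>k l. l @ [c l])"
  define b where "b k = c (L k)" for k
  have "map b [0..<k] = L k" for k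
    by (induction k) (simp_all add: L_def b_def)
  then have "\<forall>k. b k = c (map b [0..<k])"
    by (simp add: b_def)
  then show ?thesis by blast
qed

lemma not_I_has_ws_and_II_has_ws:
  fixes legal :: "nat set \<Rightarrow> 'b \<Rightarrow> bool"
  shows "\<not> (I_has_ws XX legal payoff Z \<and> II_has_ws XX legal payoff Z)"
proof
  assume "I_has_ws XX legal payoff Z \<and> II_has_ws XX legal payoff Z"
  then obtain \<sigma> :: "'b list \<Rightarrow> nat set" and \<tau> :: "nat set list \<Rightarrow> 'b" where
    \<sigma>_in: "\<And>h. \<sigma> h \<in> XX" and
    \<sigma>_wins: "\<And>b. \<forall>k. legal (\<sigma> (map b [0..<k])) (b k) \<Longrightarrow> payoff b \<notin> Z" and
    \<tau>_legal: "\<And>xs. xs \<noteq> [] \<Longrightarrow> set xs \<subseteq> XX \<Longrightarrow> legal (last xs) (\<tau> xs)" and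
    \<tau>_wins: "\<And>X. \<forall>k. X k \<in> XX \<Longrightarrow> payoff (\<lambda>k. \<tau> (map X [0..<Suc k])) \<in> Z"
    unfolding I_has_ws_def II_has_ws_def by blast
  text \<open>The play of \<open>\<sigma>\<close> against \<open>\<tau>\<close>: II's move in round \<open>k\<close> depends on the moves of I up to
    round \<open>k\<close>, each of which is \<open>\<sigma>\<close> applied to a prefix of II's earlier moves.\<close>
  obtain b :: "nat \<Rightarrow> 'b" where
    b: "\<And>k. b k = \<tau> (map (\<lambda>i. \<sigma> (take i (map b [0..<k]))) [0..<Suc k])"
    using seq_determined_by_prefixes_exists
      [of "\<lambda>h. \<tau> (map (\<lambda>i. \<sigma> (take i h)) [0..<Suc (length h)])"] by auto
  define X where "X i = \<sigma> (map b [0..<i])" for i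
  have b_X: "b k = \<tau> (map X [0..<Suc k])" for k
  proof -
    have "take i (map b [0..<k]) = map b [0..<i]" if "i < Suc k" for i
      using that by (simp add: take_map)
    then have "map (\<lambda>i. \<sigma> (take i (map b [0..<k]))) [0..<Suc k] = map X [0..<Suc k]"
      by (simp add: X_def)
    then show ?thesis
      by (subst b) (rule arg_cong[where f = \<tau>])
  qed
  have X_in: "X k \<in> XX" for k
    by (simp add: X_def \<sigma>_in)
  have "(\<lambda>k. \<tau> (map X [0..<Suc k])) = b"
    by (rule ext) (simp only: b_X)
  then have "payoff b \<in> Z"
    using \<tau>_wins[of X] X_in by simp
  moreover have "legal (\<sigma> (map b [0..<k])) (b k)" for k
  proof -
    have "legal (X k) (\<tau> (map X [0..<Suc k]))"
      using \<tau>_legal[of "map X [0..<Suc k]"] X_in by auto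
    then show ?thesis
      by (simp only: b_X X_def)
  qed
  ultimately show False
    using \<sigma>_wins by blast
qed

lemma I_wins_pt_if_I_wins_fin:
  assumes "I_wins_fin XX Z"
  shows "I_wins_pt XX Z"
proof -
  obtain \<sigma> :: "nat set list \<Rightarrow> nat set" where \<sigma>_in: "\<And>h. \<sigma> h \<in> XX" and
    \<sigma>_wins: "\<And>b. \<forall>k. legal_fin (\<sigma> (map b [0..<k])) (b k) \<Longrightarrow> payoff_fin b \<notin> Z"
    using assms unfolding I_has_ws_def by blast
  show ?thesis
    unfolding I_has_ws_def
  proof (intro exI[of _ "\<lambda>h. \<sigma> (map (\<lambda>n. {n}) h)"] conjI allI impI)
    show "\<sigma> (map (\<lambda>n. {n}) h) \<in> XX" for h
      by (rule \<sigma>_in)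
    fix b :: "nat \<Rightarrow> nat"
    assume "\<forall>k. legal_pt (\<sigma> (map (\<lambda>n. {n}) (map b [0..<k]))) (b k)"
    then have "legal_fin (\<sigma> (map (\<lambda>k. {b k}) [0..<k])) {b k}" for k
      by (simp add: legal_pt_def legal_fin_def comp_def)
    then have "payoff_fin (\<lambda>k. {b k}) \<notin> Z"
      using \<sigma>_wins by blast
    then show "payoff_pt b \<notin> Z"
      by (simp add: payoff_pt_def payoff_fin_def UNION_singleton_eq_range)
  qed
qed

lemma II_wins_fin_if_II_wins_pt:
  assumes "II_wins_pt XX Z"
  shows "II_wins_fin XX Z"
proof -
  obtain \<tau> :: "nat set list \<Rightarrow> nat" where
    \<tau>_legal: "\<And>xs. xs \<noteq> [] \<Longrightarrow> set xs \<subseteq> XX \<Longrightarrow> legal_pt (last xs) (\<tau> xs)" and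
    \<tau>_wins: "\<And>X. \<forall>k. X k \<in> XX \<Longrightarrow> payoff_pt (\<lambda>k. \<tau> (map X [0..<Suc k])) \<in> Z"
    using assms unfolding II_has_ws_def by blast
  show ?thesis
    unfolding II_has_ws_def
  proof (intro exI[of _ "\<lambda>xs. {\<tau> xs}"] conjI allI impI)
    show "legal_fin (last xs) {\<tau> xs}" if "xs \<noteq> []" "set xs \<subseteq> XX" for xs
      using \<tau>_legal[OF that] by (simp add: legal_pt_def legal_fin_def)
    show "payoff_fin (\<lambda>k. {\<tau> (map X [0..<Suc k])}) \<in> Z" if "\<forall>k. X k \<in> XX" for X
      using \<tau>_wins[OF that] by (simp add: payoff_pt_def payoff_fin_def UNION_singleton_eq_range)
  qed
qed

lemma I_wins_fin_Fr_finite: "I_wins_fin Fr {X. finite X}"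
  unfolding I_has_ws_def
proof (intro exI[of _ "\<lambda>h. {length h..}"] conjI allI impI)
  show "{length h..} \<in> Fr" for h :: "nat set list"
    by (rule atLeast_in_Fr)
  fix b :: "nat \<Rightarrow> nat set"
  assume "\<forall>k. legal_fin {length (map b [0..<k])..} (b k)"
  then have b_tail: "b k \<noteq> {} \<and> b k \<subseteq> {k..}" for k
    by (simp add: legal_fin_def)
  have unbounded: "\<exists>n\<in>payoff_fin b. k \<le> n" for k
  proof -
    obtain n where "n \<in> b k"
      using b_tail[of k] by blast
    then show ?thesis
      using b_tail[of k] unfolding payoff_fin_def by blast
  qed
  show "payoff_fin b \<notin> {X. finite X}"
  proof
    assume "payoff_fin b \<in> {X. finite X}"
    then obtain m where "\<forall>n\<in>payoff_fin b. n \<le> m"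
      by (auto simp: finite_nat_set_iff_bounded_le)
    with unbounded[of "Suc m"] show False
      by fastforce
  qed
qed

lemma II_wins_pt_Fr_if_subsets_of_infinite:
  assumes "infinite B" and "\<And>Y. Y \<subseteq> B \<Longrightarrow> Y \<in> Z"
  shows "II_wins_pt Fr Z"
proof -
  define pick where "pick S = (SOME n. n \<in> S \<inter> B)" for S
  have pick: "pick S \<in> S \<inter> B" if "S \<in> Fr" for S
    using Fr_meets_infinite[OF that assms(1)] unfolding pick_def by (meson ex_in_conv someI_ex)
  show ?thesis
    unfolding II_has_ws_def
  proof (intro exI[of _ "\<lambda>xs. pick (last xs)"] conjI allI impI)
    show "legal_pt (last xs) (pick (last xs))" if "xs \<noteq> []" "set xs \<subseteq> Fr" for xs
    proof -
      have "last xs \<in> Fr"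
        using that by auto
      then show ?thesis
        using pick by (simp add: legal_pt_def)
    qed
    show "payoff_pt (\<lambda>k. pick (last (map X [0..<Suc k]))) \<in> Z" if "\<forall>k. X k \<in> Fr" for X
      using that pick by (intro assms(2)) (auto simp: payoff_pt_def)
  qed
qed

theorem theorem2p14:
  fixes F :: "nat set set"
  assumes "proper_filter F"
  shows "(I_wins_fin Fr (F_star F) \<longleftrightarrow> I_wins_pt Fr (F_star F)) \<and>
         (II_wins_fin Fr (F_star F) \<longleftrightarrow> II_wins_pt Fr (F_star F)) \<and>
         (I_wins_fin Fr (F_star F) \<or> II_wins_fin Fr (F_star F)) \<and>
         (I_wins_fin Fr (F_star F) \<longleftrightarrow> F = Fr) \<and>
         (F = Fr \<longleftrightarrow> \<not> II_wins_fin Fr (F_star F))"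
proof (cases "F = Fr")
  case True
  then have "I_wins_fin Fr (F_star F)" "I_wins_pt Fr (F_star F)"
    using I_wins_fin_Fr_finite I_wins_pt_if_I_wins_fin by (simp_all add: F_star_Fr)
  then show ?thesis
    using True not_I_has_ws_and_II_has_ws[of Fr legal_fin payoff_fin "F_star F"]
      not_I_has_ws_and_II_has_ws[of Fr legal_pt payoff_pt "F_star F"] by blast
next
  case False
  have "Fr \<subseteq> F" and upward: "\<And>A B. A \<in> F \<Longrightarrow> A \<subseteq> B \<Longrightarrow> B \<in> F"
    using assms by (auto simp: proper_filter_def is_filter_def)
  then obtain A where "A \<in> F" "infinite (- A)"
    using False by (auto simp: Fr_def)
  then have "II_wins_pt Fr (F_star F)"
    by (intro II_wins_pt_Fr_if_subsets_of_infinite[of "- A"]) (auto simp: F_star_iff intro: upward)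
  then have "II_wins_fin Fr (F_star F)"
    by (rule II_wins_fin_if_II_wins_pt)
  then show ?thesis
    using \<open>II_wins_pt Fr (F_star F)\<close> False
      not_I_has_ws_and_II_has_ws[of Fr legal_fin payoff_fin "F_star F"]
      not_I_has_ws_and_II_has_ws[of Fr legal_pt payoff_pt "F_star F"] by blast
qed

end
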